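(* Let $n\ge1$ and $3\le l\le d$. Every $w\in\mathbb{R}^{nd}$ satisfying $y\,(w\cdot x)\ge1$ for all $(x,y)$ in the support of $\mathcal{D}$ has $\|w\|^2\ge n$. In particular, $\hat w=\arg\min\{\|w\|^2 : w\in\mathbb{R}^{nd},\ y\,(w\cdot x)\ge1 \text{ for all } (x,y)\text{ in the support of }\mathcal{D}\}$ satisfies $\|\hat w\|^2\ge n$.
   Context: Let $o_1,\dots,o_l\in\mathbb{R}^d$ be orthonormal vectors. Inputs are $x=(x[1],\dots,x[n])\in\mathbb{R}^{nd}$ with blocks $x[j]\in\mathbb{R}^d$; $w\cdot x$ is the standard inner product on $\mathbb{R}^{nd}$. The distribution $\mathcal{D}$ on $\mathbb{R}^{nd}\times\{\pm1\}$: $y$ uniform on $\{\pm1\}$; given $y=1$, an index $j_+$ uniform on $\{1,\dots,n\}$ is drawn, $x[j_+]=o_1$, and for each $j\ne j_+$ independently $x[j]=o_{i_j}$ with $i_j$ uniform on $\{3,\dots,l\}$; given $y=-1$, the same with $o_2$ instead of $o_1$. *)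

theory Defs
  imports "HOL-Analysis.Analysis" "HOL-Probability.Product_PMF"
begin

text \<open>Inputs x in R^{nd} are rendered as real^'d^'n: block j is x $ j in R^d,
  with n = CARD('n), d = CARD('d).  The orthonormal vectors
  o_1..o_l are ov 1, ..., ov l.\<close>

definition data_dist ::
  "(nat \<Rightarrow> real^'d) \<Rightarrow> nat \<Rightarrow> ((real^'d^'n::finite) \<times> real) pmf" where
  "data_dist ov l =
     bind_pmf (pmf_of_set {1, -1 :: real}) (\<lambda>y.
     bind_pmf (pmf_of_set (UNIV :: 'n set)) (\<lambda>jp.
     bind_pmf (Pi_pmf (UNIV :: 'n set) 3 (\<lambda>_. pmf_of_set {3..l})) (\<lambda>f.
     return_pmf ((\<chi> j. if j = jp then ov (if y = 1 then 1 else 2) else ov (f j)), y))))"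

end

theory Submission
  imports Defs
begin

text \<open>Fix a position j and compare the two support points that agree off block j (where they
  both carry o_3) and carry o_1 resp. o_2 in block j. A margin-1 separator w must satisfy
  w_j \<bullet> (o_1 - o_2) \<ge> 2, and since |o_1 - o_2|^2 = 2, Cauchy-Schwarz gives |w_j|^2 \<ge> 2.
  Summing over the n blocks yields |w|^2 \<ge> 2n, which is more than claimed.\<close>

definition separates_with_margin :: "('a::real_inner \<times> real) pmf \<Rightarrow> 'a \<Rightarrow> bool" where
  "separates_with_margin D w \<longleftrightarrow> (\<forall>(x, y) \<in> set_pmf D. y * (w \<bullet> x) \<ge> 1)"

lemma power2_norm_vec_eq_sum:
  fixes x :: "'a::real_inner ^ 'n"
  shows "(norm x)\<^sup>2 = (\<Sum>i\<in>UNIV. (norm (x $ i))\<^sup>2)"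
  by (simp add: power2_norm_eq_inner[of x] power2_norm_eq_inner[of "x $ _"] inner_vec_def)

lemma power2_norm_ge_of_orthonormal_margin:
  fixes a u v :: "'a::real_inner"
  assumes "u \<bullet> u = 1" and "v \<bullet> v = 1" and "u \<bullet> v = 0"
    and margin: "a \<bullet> (u - v) \<ge> 2"
  shows "(norm a)\<^sup>2 \<ge> 2"
proof -
  have "(u - v) \<bullet> (u - v) = 2"
    using assms(1-3) by (simp add: inner_diff_left inner_diff_right inner_commute)
  moreover have "4 \<le> (a \<bullet> (u - v))\<^sup>2"
    using power_mono[OF margin, of 2] by simp
  ultimately show ?thesis
    using Cauchy_Schwarz_ineq[of a "u - v"] by (simp add: power2_norm_eq_inner)
qed

lemma data_dist_support_mem:
  fixes ov :: "nat \<Rightarrow> real^'d" and jp :: "'n::finite"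
  assumes "3 \<le> l" and "y \<in> {1, -1}"
  shows "((\<chi> j. if j = jp then ov (if y = 1 then 1 else 2) else ov 3) :: real^'d^'n, y)
           \<in> set_pmf (data_dist ov l)"
proof -
  have "(\<lambda>_. 3) \<in> set_pmf (Pi_pmf (UNIV :: 'n set) 3 (\<lambda>_. pmf_of_set {3..l}))"
    using assms(1) by (simp add: set_Pi_pmf PiE_dflt_def)
  then show ?thesis
    using assms(2) unfolding data_dist_def by (force simp: set_pmf_of_set)
qed

lemma data_dist_support_diff:
  fixes ov :: "nat \<Rightarrow> real^'d" and jp :: "'n::finite"
  assumes "3 \<le> l"
  obtains x1 x2 :: "real^'d^'n"
  where "(x1, 1) \<in> set_pmf (data_dist ov l)" and "(x2, -1) \<in> set_pmf (data_dist ov l)"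
    and "x1 - x2 = axis jp (ov 1 - ov 2)"
proof
  show "((\<chi> j. if j = jp then ov (if (1::real) = 1 then 1 else 2) else ov 3), 1)
          \<in> set_pmf (data_dist ov l)"
    and "((\<chi> j. if j = jp then ov (if (-1::real) = 1 then 1 else 2) else ov 3), -1)
          \<in> set_pmf (data_dist ov l)"
    by (rule data_dist_support_mem; use assms in simp)+
qed (simp add: axis_def vec_eq_iff)

lemma separates_with_margin_block_norm:
  fixes ov :: "nat \<Rightarrow> real^'d" and w :: "real^'d^'n::finite"
  assumes "3 \<le> l"
    and orth: "\<forall>i\<in>{1..l}. \<forall>k\<in>{1..l}. ov i \<bullet> ov k = (if i = k then 1 else 0)"
    and sep: "separates_with_margin (data_dist ov l) w"
  shows "(norm (w $ j))\<^sup>2 \<ge> 2"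
proof -
  obtain x1 x2 where x1: "(x1, 1) \<in> set_pmf (data_dist ov l)"
    and x2: "(x2, -1) \<in> set_pmf (data_dist ov l)"
    and diff: "x1 - x2 = axis j (ov 1 - ov 2)"
    using data_dist_support_diff[OF assms(1)] .
  have "w \<bullet> x1 \<ge> 1" and "w \<bullet> x2 \<le> -1"
    using sep x1 x2 unfolding separates_with_margin_def by fastforce+
  then have "w \<bullet> (x1 - x2) \<ge> 2"
    by (simp add: inner_diff_right)
  then have "w $ j \<bullet> (ov 1 - ov 2) \<ge> 2"
    by (simp add: diff inner_axis)
  then show ?thesis
    by (rule power2_norm_ge_of_orthonormal_margin[rotated 3]) (use orth assms(1) in auto)
qed

lemma separates_with_margin_norm:
  fixes ov :: "nat \<Rightarrow> real^'d" and w :: "real^'d^'n::finite"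
  assumes "3 \<le> l"
    and "\<forall>i\<in>{1..l}. \<forall>k\<in>{1..l}. ov i \<bullet> ov k = (if i = k then 1 else 0)"
    and "separates_with_margin (data_dist ov l) w"
  shows "(norm w)\<^sup>2 \<ge> 2 * real CARD('n)"
proof -
  have "(\<Sum>j\<in>(UNIV::'n set). 2) \<le> (\<Sum>j\<in>UNIV. (norm (w $ j))\<^sup>2)"
    by (rule sum_mono) (rule separates_with_margin_block_norm[OF assms])
  then show ?thesis
    by (simp add: power2_norm_vec_eq_sum)
qed

theorem proposition6p1:
  fixes ov :: "nat \<Rightarrow> real^'d" and l :: nat
  assumes "3 \<le> l" and "l \<le> CARD('d)"
    and "\<forall>i\<in>{1..l}. \<forall>k\<in>{1..l}. ov i \<bullet> ov k = (if i = k then 1 else 0)"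
  shows "(\<forall>w :: real^'d^'n::finite.
            (\<forall>(x, y) \<in> set_pmf (data_dist ov l :: ((real^'d^'n) \<times> real) pmf). y * (w \<bullet> x) \<ge> 1)
            \<longrightarrow> (norm w)^2 \<ge> real CARD('n))
       \<and> (\<forall>wh :: real^'d^'n.
            ((\<forall>(x, y) \<in> set_pmf (data_dist ov l :: ((real^'d^'n) \<times> real) pmf). y * (wh \<bullet> x) \<ge> 1)
             \<and> (\<forall>w :: real^'d^'n.
                  (\<forall>(x, y) \<in> set_pmf (data_dist ov l :: ((real^'d^'n) \<times> real) pmf). y * (w \<bullet> x) \<ge> 1)
                  \<longrightarrow> (norm wh)^2 \<le> (norm w)^2))
            \<longrightarrow> (norm wh)^2 \<ge> real CARD('n))"
proof -
  have "(norm w)\<^sup>2 \<ge> real CARD('n)"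
    if "separates_with_margin (data_dist ov l) w" for w :: "real^'d^'n"
    using separates_with_margin_norm[OF assms(1,3) that] by simp
  then show ?thesis
    unfolding separates_with_margin_def by blast
qed

end
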